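(* For $C\in\mathbb D$, $$C^\beta=\{c\in\mathcal S: c\circ\bar K_C(z,\partial_z)=0\},$$ where $\bar K_C(z,\partial_z)$ is $\bar K_C$ with $x$ replaced by $z$ and $c\circ\bar K_C(z,\partial_z)$ is the distribution $u\mapsto c(\bar K_C(z,\partial_z)u)$.
   Context: Fix an integer $r>1$ and constants $a_1,\dots,a_{r-2}\in\mathbb C$, and let $L_0=\partial^r-a_{r-2}\partial^{r-2}-\cdots-a_1\partial-x$, where $\partial=d/dx$. Fix a basis $f_1,\dots,f_r$ of $\ker L_0$ normalized so that $|Wr(f_1,\dots,f_r)|=1$. For a function $f$ of one variable write $\hat f(x,z)=f(x+z)$. $\mathcal S$ denotes the space of finitely supported distributions in the $z$-plane: finite linear combinations of $\delta_\lambda\circ\partial_z^j$, where $\delta_\lambda$ evaluates its argument at $z=\lambda$; applied to a function of $(x,z)$ such a distribution acts in $z$ and yields a function of $x$. $\mathbb D$ is the set of finite-dimensional subspaces $C\subset\mathcal S$ having a basis $c_i=\delta_{\lambda_i}\circ(\partial_z+\gamma_i)$, $i=1,\dots,n$ ($n\ge1$), with $\lambda_i$ pairwise distinct and $\gamma_i\in\mathbb C$. For $C\in\mathbb D$ put $N=rn$, let $\phi_1,\dots,\phi_N$ be the functions $c_i(\hat f_j)$, and let $\bar K_C$ be the operator $u\mapsto\kappa\,|Wr(\phi_1,\dots,\phi_N,u)|$ with $\kappa$ the nonzero constant making the coefficient of $\partial^N$ a monic polynomial (it has polynomial coefficients); $Wr(v_1,\dots,v_m)$ is the matrix with first row $(v_1,\dots,v_m)$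 and each subsequent row the derivative of the previous. $\flat$ is the unique $\mathbb C$-linear anti-automorphism of the Weyl algebra $\mathbb C[x]\langle\partial\rangle$ with $x^\flat=L_0$, $\partial^\flat=\partial$ (equivalently $T(x,\partial_x)\hat f(x,z)=T^\flat(z,\partial_z)\hat f(x,z)$ for all $f\in\ker L_0$). $C^\beta:=\{c\in\mathcal S: c(\hat f)\in\ker\bar K_C^\flat\text{ for all }f\in\ker L_0\}$. *)

theory Defs
  imports "HOL-Analysis.Analysis" "HOL-Computational_Algebra.Polynomial"
begin

definition detm :: "nat \<Rightarrow> (nat \<Rightarrow> nat \<Rightarrow> complex) \<Rightarrow> complex" where
  "detm m A = (\<Sum>p | p permutes {..<m}. of_int (sign p) * (\<Prod>i<m. A i (p i)))"

definition wronskian :: "nat \<Rightarrow> (nat \<Rightarrow> complex \<Rightarrow> complex) \<Rightarrow> complex \<Rightarrow> complex" where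
  "wronskian m v x = detm m (\<lambda>i j. (deriv ^^ i) (v j) x)"

(* Finitely supported distributions in the z-plane: c (lambda, j) is the coefficient
   of delta_lambda o d_z^j. *)
type_synonym fdist = "complex \<times> nat \<Rightarrow> complex"

definition Sdist :: "fdist set" where
  "Sdist = {c. finite {p. c p \<noteq> 0}}"

definition dapp :: "fdist \<Rightarrow> (complex \<Rightarrow> complex) \<Rightarrow> complex" where
  "dapp c g = (\<Sum>p\<in>{p. c p \<noteq> 0}. c p * (deriv ^^ snd p) g (fst p))"

(* delta_lambda o (d_z + gamma) *)
definition cop :: "complex \<Rightarrow> complex \<Rightarrow> fdist" where
  "cop lam gam = (\<lambda>p. if p = (lam, 1) then 1 else if p = (lam, 0) then gam else 0)"

definition L0 :: "nat \<Rightarrow> (nat \<Rightarrow> complex) \<Rightarrow> (complex \<Rightarrow> complex) \<Rightarrow> complex \<Rightarrow> complex" where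
  "L0 r a u = (\<lambda>x. (deriv ^^ r) u x - (\<Sum>k\<in>{1..r-2}. a k * (deriv ^^ k) u x) - x * u x)"

definition kerL0 :: "nat \<Rightarrow> (nat \<Rightarrow> complex) \<Rightarrow> (complex \<Rightarrow> complex) set" where
  "kerL0 r a = {f. f holomorphic_on UNIV \<and> (\<forall>x. L0 r a f x = 0)}"

(* phi_m = c_i(hat f_j), m = i*r + j *)
definition phiC :: "nat \<Rightarrow> (nat \<Rightarrow> complex \<Rightarrow> complex) \<Rightarrow> (nat \<Rightarrow> complex) \<Rightarrow> (nat \<Rightarrow> complex)
    \<Rightarrow> nat \<Rightarrow> complex \<Rightarrow> complex" where
  "phiC r f lam gam m = (\<lambda>x. dapp (cop (lam (m div r)) (gam (m div r))) (\<lambda>z. f (m mod r) (x + z)))"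

(* Coefficient of u^(k) in |Wr(phi_0,...,phi_{N-1},u)| (linearity in the last column) *)
definition wrcoeff :: "nat \<Rightarrow> (nat \<Rightarrow> complex \<Rightarrow> complex) \<Rightarrow> nat \<Rightarrow> complex \<Rightarrow> complex" where
  "wrcoeff N phi k x = detm (Suc N)
     (\<lambda>i j. if j < N then (deriv ^^ i) (phi j) x else if i = k then 1 else 0)"

definition kappa :: "nat \<Rightarrow> (nat \<Rightarrow> complex \<Rightarrow> complex) \<Rightarrow> complex" where
  "kappa N phi = (THE \<kappa>. \<kappa> \<noteq> 0 \<and>
     (\<exists>p. lead_coeff p = 1 \<and> (\<forall>x. poly p x = \<kappa> * wrcoeff N phi N x)))"

(* polynomial coefficients of Kbar_C = sum_{k<=N} P k (x) d^k *)
definition Kbar :: "nat \<Rightarrow> (nat \<Rightarrow> complex \<Rightarrow> complex) \<Rightarrow> (nat \<Rightarrow> complex) \<Rightarrow> (nat \<Rightarrow> complex)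
    \<Rightarrow> nat \<Rightarrow> nat \<Rightarrow> complex poly" where
  "Kbar r f lam gam n k = (let N = r * n; phi = phiC r f lam gam in
     (THE p. \<forall>x. poly p x = kappa N phi * wrcoeff N phi k x))"

definition opapp :: "(nat \<Rightarrow> complex poly) \<Rightarrow> nat \<Rightarrow> (complex \<Rightarrow> complex) \<Rightarrow> complex \<Rightarrow> complex" where
  "opapp P N u = (\<lambda>x. \<Sum>k\<le>N. poly (P k) x * (deriv ^^ k) u x)"

definition polyL0 :: "nat \<Rightarrow> (nat \<Rightarrow> complex) \<Rightarrow> complex poly \<Rightarrow> (complex \<Rightarrow> complex) \<Rightarrow> complex \<Rightarrow> complex" where
  "polyL0 r a p u = (\<lambda>x. \<Sum>j\<le>degree p. coeff p j * ((L0 r a) ^^ j) u x)"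

(* flat: the anti-automorphism x |-> L_0, d |-> d, so
   (sum_k P_k(x) d^k)^flat = sum_k d^k o P_k(L_0); here its action on a function *)
definition flatapp :: "nat \<Rightarrow> (nat \<Rightarrow> complex) \<Rightarrow> (nat \<Rightarrow> complex poly) \<Rightarrow> nat
    \<Rightarrow> (complex \<Rightarrow> complex) \<Rightarrow> complex \<Rightarrow> complex" where
  "flatapp r a P N u = (\<lambda>x. \<Sum>k\<le>N. (deriv ^^ k) (polyL0 r a (P k) u) x)"

end

(* Write hat g (x, z) = g (x + z). For g in ker L_0 one has d_x hat g = d_z hat g and
   L_0(x, d_x) hat g = z hat g, so for every operator T = sum_k P_k(x) d^k with polynomial
   coefficients, T^flat(x, d_x) applied to c(hat g) equals (c o T(z, d_z))(hat g), and
   c o T(z, d_z) is again finitely supported. Hence c lies in C^beta iff e = c o Kbar_C(z, d_z)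
   kills every hat g. Such an e vanishes: the distributions killing all hat g are stable under
   e |-> e o (z - mu), which lowers the order of e at mu, so a descent ends at a multiple of
   delta_mu, and that multiple is zero because ker L_0 contains a function that is not
   identically zero (the Wronskian of the basis is 1). Nothing else about Kbar_C is used. *)

theory Submission
  imports Defs "HOL-Complex_Analysis.Cauchy_Integral_Formula"
begin

section \<open>Higher derivatives and Wronskians\<close>

lemma wronskian_zero_column:
  assumes "j < m" "v j = (\<lambda>_. 0)"
  shows "wronskian m v x = 0"
  unfolding wronskian_def detm_def
proof (intro sum.neutral ballI)
  fix p
  assume "p \<in> {p. p permutes {..<m}}"
  then have "inv p j < m" "p (inv p j) = j"
    using assms(1) permutes_in_image[OF permutes_inv] permutes_inverses(1) by fastforce+
  then show "of_int (sign p) * (\<Prod>i<m. (deriv ^^ i) (v (p i)) x) = 0"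
    using assms(2) by (auto intro!: prod_zero bexI[of _ "inv p j"])
qed

lemma holomorphic_on_translate:
  assumes "g holomorphic_on UNIV"
  shows "(\<lambda>z. g (c + z)) holomorphic_on UNIV"
  using holomorphic_on_compose[of "\<lambda>z. c + z" UNIV g] holomorphic_on_subset[OF assms]
  by (simp add: o_def holomorphic_on_add holomorphic_on_const)

lemma higher_deriv_translate:
  assumes "g holomorphic_on UNIV"
  shows "(deriv ^^ k) (\<lambda>w. g (c + w)) = (\<lambda>w. (deriv ^^ k) g (c + w))"
  using higher_deriv_compose_linear'[OF assms open_UNIV open_UNIV UNIV_I, of 1 c, where n = k]
  by (auto simp: add.commute)

lemma higher_deriv_sum:
  fixes G :: "'i \<Rightarrow> complex \<Rightarrow> complex"
  assumes "finite I" "\<And>i. i \<in> I \<Longrightarrow> G i holomorphic_on S" "open S" "z \<in> S"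
  shows "(deriv ^^ k) (\<lambda>w. \<Sum>i\<in>I. G i w) z = (\<Sum>i\<in>I. (deriv ^^ k) (G i) z)"
  using assms(1,2)
proof (induction I rule: finite_induct)
  case (insert i I)
  have "(\<lambda>w. \<Sum>j\<in>I. G j w) holomorphic_on S"
    using insert by (intro holomorphic_on_sum) auto
  then have "(deriv ^^ k) (\<lambda>w. G i w + (\<Sum>j\<in>I. G j w)) z
      = (deriv ^^ k) (G i) z + (deriv ^^ k) (\<lambda>w. \<Sum>j\<in>I. G j w) z"
    using insert assms(3,4) by (intro higher_deriv_add) auto
  then show ?case
    using insert by simp
qed simp

lemma higher_deriv_zmult:
  fixes G :: "complex \<Rightarrow> complex"
  assumes "G holomorphic_on S" "open S" "z \<in> S"
  shows "(deriv ^^ k) (\<lambda>w. w * G w) z = z * (deriv ^^ k) G z + of_nat k * (deriv ^^ (k - 1)) G z"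
proof (cases k)
  case (Suc m)
  have "(deriv ^^ k) (\<lambda>w. w * G w) z
      = (\<Sum>i = 0..k. of_nat (k choose i) * (deriv ^^ i) (\<lambda>w. w) z * (deriv ^^ (k - i)) G z)"
    using assms by (intro higher_deriv_mult) (auto intro: holomorphic_intros)
  also have "\<dots> = (\<Sum>i\<in>{0, 1}. of_nat (k choose i) * (deriv ^^ i) (\<lambda>w. w) z * (deriv ^^ (k - i)) G z)"
    by (rule sum.mono_neutral_right) (auto simp: Suc)
  also have "\<dots> = z * (deriv ^^ k) G z + of_nat k * (deriv ^^ (k - 1)) G z"
    by simp
  finally show ?thesis .
qed simp

section \<open>Pairing finitely supported distributions with jets\<close>

definition fdist_supp :: "fdist \<Rightarrow> (complex \<times> nat) set" where
  "fdist_supp e = {p. e p \<noteq> 0}"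

definition fdist_pair :: "fdist \<Rightarrow> (nat \<Rightarrow> complex \<Rightarrow> complex) \<Rightarrow> complex" where
  "fdist_pair e H = (\<Sum>p\<in>fdist_supp e. e p * H (snd p) (fst p))"

lemma Sdist_iff_finite_supp: "e \<in> Sdist \<longleftrightarrow> finite (fdist_supp e)"
  by (simp add: Sdist_def fdist_supp_def)

lemma dapp_eq_fdist_pair: "dapp e G = fdist_pair e (\<lambda>j. (deriv ^^ j) G)"
  by (simp add: dapp_def fdist_pair_def fdist_supp_def)

lemma fdist_pair_superset:
  assumes "finite S" "fdist_supp e \<subseteq> S"
  shows "fdist_pair e H = (\<Sum>p\<in>S. e p * H (snd p) (fst p))"
  unfolding fdist_pair_def
  by (rule sum.mono_neutral_left) (use assms in \<open>auto simp: fdist_supp_def\<close>)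

lemma fdist_supp_sum: "fdist_supp (\<lambda>q. \<Sum>i\<in>I. E i q) \<subseteq> (\<Union>i\<in>I. fdist_supp (E i))"
  unfolding fdist_supp_def by (blast intro: sum.neutral)

lemma Sdist_sum:
  assumes "finite I" "\<And>i. i \<in> I \<Longrightarrow> E i \<in> Sdist"
  shows "(\<lambda>q. \<Sum>i\<in>I. E i q) \<in> Sdist"
  unfolding Sdist_iff_finite_supp
  by (rule finite_subset[OF fdist_supp_sum]) (use assms in \<open>auto simp: Sdist_iff_finite_supp\<close>)

lemma fdist_pair_sum:
  assumes "finite I" "\<And>i. i \<in> I \<Longrightarrow> E i \<in> Sdist"
  shows "fdist_pair (\<lambda>q. \<Sum>i\<in>I. E i q) H = (\<Sum>i\<in>I. fdist_pair (E i) H)"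
proof -
  let ?S = "\<Union>i\<in>I. fdist_supp (E i)"
  have "finite ?S"
    using assms by (auto simp: Sdist_iff_finite_supp)
  then have "fdist_pair (\<lambda>q. \<Sum>i\<in>I. E i q) H = (\<Sum>p\<in>?S. \<Sum>i\<in>I. E i p * H (snd p) (fst p))"
    by (simp add: fdist_pair_superset[OF _ fdist_supp_sum] sum_distrib_right)
  also have "\<dots> = (\<Sum>i\<in>I. fdist_pair (E i) H)"
    using \<open>finite ?S\<close>
    by (subst sum.swap) (auto intro!: sum.cong fdist_pair_superset[symmetric])
  finally show ?thesis .
qed

lemma fdist_pair_add:
  assumes "e1 \<in> Sdist" "e2 \<in> Sdist"
  shows "fdist_pair (\<lambda>q. e1 q + e2 q) H = fdist_pair e1 H + fdist_pair e2 H"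
proof -
  let ?S = "fdist_supp e1 \<union> fdist_supp e2"
  have "finite ?S" "fdist_supp (\<lambda>q. e1 q + e2 q) \<subseteq> ?S"
    using assms by (auto simp: Sdist_iff_finite_supp fdist_supp_def)
  then show ?thesis
    by (simp add: fdist_pair_superset[of ?S] distrib_right sum.distrib)
qed

lemma fdist_pair_diff:
  assumes "e1 \<in> Sdist" "e2 \<in> Sdist"
  shows "fdist_pair (\<lambda>q. e1 q - e2 q) H = fdist_pair e1 H - fdist_pair e2 H"
proof -
  let ?S = "fdist_supp e1 \<union> fdist_supp e2"
  have "finite ?S" "fdist_supp (\<lambda>q. e1 q - e2 q) \<subseteq> ?S"
    using assms by (auto simp: Sdist_iff_finite_supp fdist_supp_def)
  then show ?thesis
    by (simp add: fdist_pair_superset[of ?S] left_diff_distrib sum_subtractf)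
qed

lemma fdist_pair_weight:
  assumes "e \<in> Sdist"
  shows "fdist_pair (\<lambda>q. w q * e q) H = fdist_pair e (\<lambda>j l. w (l, j) * H j l)"
proof -
  have "finite (fdist_supp e)" "fdist_supp (\<lambda>q. w q * e q) \<subseteq> fdist_supp e"
    using assms by (auto simp: Sdist_iff_finite_supp fdist_supp_def)
  then show ?thesis
    by (simp add: fdist_pair_superset[of "fdist_supp e"] mult_ac)
qed

lemma fdist_pair_cmult:
  assumes "e \<in> Sdist"
  shows "fdist_pair (\<lambda>q. s * e q) H = s * fdist_pair e H"
  using fdist_pair_weight[OF assms, of "\<lambda>_. s"] by (simp add: fdist_pair_def sum_distrib_left mult_ac)

lemma Sdist_weight: "e \<in> Sdist \<Longrightarrow> (\<lambda>q. w q * e q) \<in> Sdist"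
  by (auto simp: Sdist_iff_finite_supp fdist_supp_def elim: rev_finite_subset)

lemma Sdist_diff: "e1 \<in> Sdist \<Longrightarrow> e2 \<in> Sdist \<Longrightarrow> (\<lambda>q. e1 q - e2 q) \<in> Sdist"
  unfolding Sdist_iff_finite_supp
  by (rule finite_subset[of _ "fdist_supp e1 \<union> fdist_supp e2"]) (auto simp: fdist_supp_def)

section \<open>Composing distributions with differential operators\<close>

definition fdist_comp_deriv :: "fdist \<Rightarrow> fdist" where
  "fdist_comp_deriv e = (\<lambda>(l, j). if j = 0 then 0 else e (l, j - 1))"

lemma fdist_supp_comp_deriv:
  "fdist_supp (fdist_comp_deriv e) = (\<lambda>(l, j). (l, Suc j)) ` fdist_supp e"
  by (force simp: fdist_supp_def fdist_comp_deriv_def split: if_splits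
      intro: image_eqI[where x = "(_, _ - 1)"])

lemma Sdist_comp_deriv_pow: "e \<in> Sdist \<Longrightarrow> (fdist_comp_deriv ^^ k) e \<in> Sdist"
  by (induction k) (auto simp: Sdist_iff_finite_supp fdist_supp_comp_deriv)

lemma fdist_pair_comp_deriv: "fdist_pair (fdist_comp_deriv e) H = fdist_pair e (\<lambda>j. H (Suc j))"
  unfolding fdist_pair_def fdist_supp_comp_deriv
  by (subst sum.reindex) (auto simp: inj_on_def fdist_comp_deriv_def split_beta)

lemma fdist_pair_comp_deriv_pow:
  "fdist_pair ((fdist_comp_deriv ^^ k) e) H = fdist_pair e (\<lambda>j. H (j + k))"
  by (induction k arbitrary: H) (simp_all add: fdist_pair_comp_deriv)

(* By Leibniz, (z u)^(j) = z u^(j) + j u^(j - 1). *)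
definition fdist_comp_z :: "fdist \<Rightarrow> fdist" where
  "fdist_comp_z e = (\<lambda>(l, j). l * e (l, j) + of_nat (Suc j) * e (l, Suc j))"

lemma Sdist_comp_z:
  assumes "e \<in> Sdist"
  shows "fdist_comp_z e \<in> Sdist"
proof -
  have "fdist_supp (fdist_comp_z e) \<subseteq> fdist_supp e \<union> (\<lambda>(l, j). (l, j - 1)) ` fdist_supp e"
    by (force simp: fdist_supp_def fdist_comp_z_def intro: image_eqI[where x = "(_, Suc _)"])
  then show ?thesis
    using assms by (auto simp: Sdist_iff_finite_supp elim: finite_subset)
qed

lemma Sdist_comp_z_pow: "e \<in> Sdist \<Longrightarrow> (fdist_comp_z ^^ k) e \<in> Sdist"
  by (induction k) (auto intro: Sdist_comp_z)

lemma fdist_pair_comp_z: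
  assumes "e \<in> Sdist"
  shows "fdist_pair (fdist_comp_z e) H = fdist_pair e (\<lambda>j l. l * H j l + of_nat j * H (j - 1) l)"
proof -
  define lowered where "lowered = (\<lambda>(l, j). of_nat (Suc j) * e (l, Suc j))"
  have "fdist_comp_deriv lowered = (\<lambda>q. of_nat (snd q) * e q)"
    by (auto simp: fdist_comp_deriv_def lowered_def)
  then have "fdist_pair lowered H = fdist_pair (\<lambda>q. of_nat (snd q) * e q) (\<lambda>j. H (j - 1))"
    using fdist_pair_comp_deriv[of lowered "\<lambda>j. H (j - 1)"] by simp
  also have "\<dots> = fdist_pair e (\<lambda>j l. of_nat j * H (j - 1) l)"
    using assms by (simp add: fdist_pair_weight)
  finally have lowered: "fdist_pair lowered H = fdist_pair e (\<lambda>j l. of_nat j * H (j - 1) l)" .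
  have split: "fdist_comp_z e = (\<lambda>q. fst q * e q + lowered q)"
    by (auto simp: fdist_comp_z_def lowered_def)
  then have "lowered \<in> Sdist"
    using Sdist_diff[OF Sdist_comp_z Sdist_weight, OF assms assms, of fst] by simp
  from split show ?thesis
    using assms \<open>lowered \<in> Sdist\<close>
    by (simp add: fdist_pair_add Sdist_weight fdist_pair_weight lowered)
       (simp add: fdist_pair_def distrib_left sum.distrib)
qed

definition fdist_comp_poly :: "complex poly \<Rightarrow> fdist \<Rightarrow> fdist" where
  "fdist_comp_poly p e = (\<lambda>q. \<Sum>i\<le>degree p. coeff p i * (fdist_comp_z ^^ i) e q)"

definition fdist_comp_op :: "(nat \<Rightarrow> complex poly) \<Rightarrow> nat \<Rightarrow> fdist \<Rightarrow> fdist" where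
  "fdist_comp_op P N e = (\<lambda>q. \<Sum>k\<le>N. (fdist_comp_deriv ^^ k) (fdist_comp_poly (P k) e) q)"

lemma Sdist_comp_poly: "e \<in> Sdist \<Longrightarrow> fdist_comp_poly p e \<in> Sdist"
  unfolding fdist_comp_poly_def by (intro Sdist_sum Sdist_weight Sdist_comp_z_pow) auto

lemma Sdist_comp_op: "e \<in> Sdist \<Longrightarrow> fdist_comp_op P N e \<in> Sdist"
  unfolding fdist_comp_op_def by (intro Sdist_sum Sdist_comp_deriv_pow Sdist_comp_poly) auto

lemma dapp_comp_poly_eq_sum:
  assumes "e \<in> Sdist"
  shows "dapp (fdist_comp_poly p e) G = (\<Sum>i\<le>degree p. coeff p i * dapp ((fdist_comp_z ^^ i) e) G)"
  unfolding fdist_comp_poly_def dapp_eq_fdist_pair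
  using assms by (simp add: fdist_pair_sum Sdist_weight Sdist_comp_z_pow fdist_pair_cmult)

lemma dapp_comp_op_eq_sum:
  assumes "e \<in> Sdist"
  shows "dapp (fdist_comp_op P N e) G = (\<Sum>k\<le>N. dapp (fdist_comp_poly (P k) e) ((deriv ^^ k) G))"
  unfolding fdist_comp_op_def
  using assms by (simp add: dapp_eq_fdist_pair fdist_pair_sum Sdist_comp_deriv_pow Sdist_comp_poly
      fdist_pair_comp_deriv_pow funpow_add)

lemma dapp_cmult:
  assumes "G holomorphic_on UNIV"
  shows "dapp e (\<lambda>z. s * G z) = s * dapp e G"
  using higher_deriv_cmult[OF assms UNIV_I open_UNIV]
  by (simp add: dapp_def sum_distrib_left mult_ac)

lemma dapp_diff:
  assumes "G holomorphic_on UNIV" "H holomorphic_on UNIV"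
  shows "dapp e (\<lambda>z. G z - H z) = dapp e G - dapp e H"
  using higher_deriv_diff[OF assms open_UNIV UNIV_I]
  by (simp add: dapp_def right_diff_distrib sum_subtractf)

lemma dapp_sum:
  assumes "finite I" "\<And>i. i \<in> I \<Longrightarrow> G i holomorphic_on UNIV"
  shows "dapp e (\<lambda>z. \<Sum>i\<in>I. G i z) = (\<Sum>i\<in>I. dapp e (G i))"
  using higher_deriv_sum[OF assms open_UNIV UNIV_I]
  by (simp add: dapp_def sum_distrib_left sum.swap[of _ I])

lemma dapp_comp_z:
  assumes "G holomorphic_on UNIV" "e \<in> Sdist"
  shows "dapp e (\<lambda>z. z * G z) = dapp (fdist_comp_z e) G"
  using higher_deriv_zmult[OF assms(1) open_UNIV UNIV_I]
  by (simp add: dapp_eq_fdist_pair fdist_pair_comp_z[OF assms(2)]) (simp add: fdist_pair_def)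

lemma dapp_comp_z_pow:
  assumes "G holomorphic_on UNIV" "e \<in> Sdist"
  shows "dapp e (\<lambda>z. z ^ i * G z) = dapp ((fdist_comp_z ^^ i) e) G"
  using assms(2)
proof (induction i arbitrary: e)
  case (Suc i)
  have "(\<lambda>z. z ^ i * G z) holomorphic_on UNIV"
    using assms(1) by (intro holomorphic_intros)
  then have "dapp e (\<lambda>z. z * (z ^ i * G z)) = dapp ((fdist_comp_z ^^ i) (fdist_comp_z e)) G"
    using Suc by (simp add: dapp_comp_z Sdist_comp_z)
  then show ?case
    by (simp add: mult.assoc funpow_Suc_right del: funpow.simps)
qed simp

lemma dapp_comp_poly:
  assumes "G holomorphic_on UNIV" "e \<in> Sdist"
  shows "dapp e (\<lambda>z. poly p z * G z) = dapp (fdist_comp_poly p e) G"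
proof -
  have hol: "(\<lambda>z. z ^ i * G z) holomorphic_on UNIV" for i
    using assms(1) by (intro holomorphic_intros)
  have "(\<lambda>z. poly p z * G z) = (\<lambda>z. \<Sum>i\<le>degree p. coeff p i * (z ^ i * G z))"
    by (simp add: poly_altdef sum_distrib_right mult.assoc)
  then show ?thesis
    using assms hol
    by (simp add: dapp_sum dapp_cmult dapp_comp_z_pow dapp_comp_poly_eq_sum holomorphic_on_mult)
qed

lemma dapp_comp_op:
  assumes "u holomorphic_on UNIV" "e \<in> Sdist"
  shows "dapp e (opapp P N u) = dapp (fdist_comp_op P N e) u"
proof -
  have "(deriv ^^ k) u holomorphic_on UNIV" for k
    using assms(1) by (intro holomorphic_intros) auto
  moreover have "(\<lambda>z. poly (P k) z * (deriv ^^ k) u z) holomorphic_on UNIV" for k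
    using assms(1) by (intro holomorphic_intros) auto
  ultimately show ?thesis
    using assms(2) by (simp add: opapp_def dapp_sum dapp_comp_poly dapp_comp_op_eq_sum)
qed

section \<open>Distributions applied to translates\<close>

definition fdist_hat :: "fdist \<Rightarrow> (complex \<Rightarrow> complex) \<Rightarrow> complex \<Rightarrow> complex" where
  "fdist_hat e g = (\<lambda>x. dapp e (\<lambda>z. g (x + z)))"

lemma fdist_hat_eq_sum:
  assumes "g holomorphic_on UNIV"
  shows "fdist_hat e g x = (\<Sum>p\<in>fdist_supp e. e p * (deriv ^^ snd p) g (fst p + x))"
  by (simp add: fdist_hat_def dapp_eq_fdist_pair fdist_pair_def higher_deriv_translate[OF assms]
      add.commute)

lemma higher_deriv_fdist_hat:
  assumes "g holomorphic_on UNIV" "e \<in> Sdist"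
  shows "(deriv ^^ k) (fdist_hat e g) = fdist_hat e ((deriv ^^ k) g)"
proof
  fix x
  have hol: "(\<lambda>x. c * (deriv ^^ j) g (l + x)) holomorphic_on UNIV" for c j l
    using assms(1)
    by (intro holomorphic_on_mult holomorphic_on_const holomorphic_on_translate
        holomorphic_higher_deriv) auto
  have "fdist_hat e g = (\<lambda>x. \<Sum>p\<in>fdist_supp e. e p * (deriv ^^ snd p) g (fst p + x))"
    using assms(1) by (intro ext) (simp add: fdist_hat_eq_sum)
  then have "(deriv ^^ k) (fdist_hat e g) x
      = (\<Sum>p\<in>fdist_supp e. (deriv ^^ k) (\<lambda>x. e p * (deriv ^^ snd p) g (fst p + x)) x)"
    using assms(2) hol by (simp add: higher_deriv_sum[of _ _ UNIV] Sdist_iff_finite_supp)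
  also have "\<dots> = (\<Sum>p\<in>fdist_supp e. e p * (deriv ^^ snd p) ((deriv ^^ k) g) (fst p + x))"
    using hol[of 1] assms(1)
    by (simp add: higher_deriv_cmult[of _ UNIV] higher_deriv_translate holomorphic_higher_deriv
        flip: funpow_add[THEN fun_cong, unfolded o_def]) (simp add: add.commute)
  also have "\<dots> = fdist_hat e ((deriv ^^ k) g) x"
    using assms(1) by (simp add: fdist_hat_eq_sum holomorphic_higher_deriv)
  finally show "(deriv ^^ k) (fdist_hat e g) x = fdist_hat e ((deriv ^^ k) g) x" .
qed

lemma L0_fdist_hat:
  assumes "g \<in> kerL0 r a" "e \<in> Sdist"
  shows "L0 r a (fdist_hat e g) = fdist_hat (fdist_comp_z e) g"
proof
  fix x
  have g: "g holomorphic_on UNIV" and ode: "\<And>w. L0 r a g w = 0"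
    using assms(1) by (auto simp: kerL0_def)
  have hol: "(\<lambda>z. c * (deriv ^^ k) g (x + z)) holomorphic_on UNIV" for c k
    using g
    by (intro holomorphic_on_mult holomorphic_on_const holomorphic_on_translate
        holomorphic_higher_deriv) auto
  have "L0 r a (fdist_hat e g) x = fdist_hat e ((deriv ^^ r) g) x
      - (\<Sum>k\<in>{1..r-2}. a k * fdist_hat e ((deriv ^^ k) g) x) - x * fdist_hat e g x"
    by (simp add: L0_def higher_deriv_fdist_hat[OF g assms(2)])
  also have "\<dots> = dapp e (\<lambda>z. (deriv ^^ r) g (x + z)
      - (\<Sum>k\<in>{1..r-2}. a k * (deriv ^^ k) g (x + z)) - x * g (x + z))"
  proof -
    have "(\<lambda>z. \<Sum>k\<in>{1..r-2}. a k * (deriv ^^ k) g (x + z)) holomorphic_on UNIV"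
      by (intro holomorphic_on_sum hol)
    moreover have "(\<lambda>z. (deriv ^^ k) g (x + z)) holomorphic_on UNIV" for k
      using hol[of 1 k] by simp
    ultimately show ?thesis
      using hol[of x 0] holomorphic_on_translate[OF g]
      by (simp add: fdist_hat_def dapp_diff holomorphic_on_diff dapp_sum dapp_cmult hol)
  qed
  also have "(\<lambda>z. (deriv ^^ r) g (x + z) - (\<Sum>k\<in>{1..r-2}. a k * (deriv ^^ k) g (x + z))
      - x * g (x + z)) = (\<lambda>z. z * g (x + z))"
    using ode by (auto simp: L0_def algebra_simps)
  also have "dapp e (\<lambda>z. z * g (x + z)) = fdist_hat (fdist_comp_z e) g x"
    using g assms(2) by (simp add: fdist_hat_def dapp_comp_z holomorphic_on_translate)
  finally show "L0 r a (fdist_hat e g) x = fdist_hat (fdist_comp_z e) g x" .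
qed

lemma L0_pow_fdist_hat:
  assumes "g \<in> kerL0 r a" "e \<in> Sdist"
  shows "(L0 r a ^^ i) (fdist_hat e g) = fdist_hat ((fdist_comp_z ^^ i) e) g"
  by (induction i) (simp_all add: L0_fdist_hat assms Sdist_comp_z_pow)

lemma polyL0_fdist_hat:
  assumes "g \<in> kerL0 r a" "e \<in> Sdist"
  shows "polyL0 r a p (fdist_hat e g) = fdist_hat (fdist_comp_poly p e) g"
proof
  fix x
  have "polyL0 r a p (fdist_hat e g) x
      = (\<Sum>i\<le>degree p. coeff p i * fdist_hat ((fdist_comp_z ^^ i) e) g x)"
    using assms by (simp add: polyL0_def L0_pow_fdist_hat)
  also have "\<dots> = fdist_hat (fdist_comp_poly p e) g x"
    using assms(2) by (simp add: fdist_hat_def dapp_comp_poly_eq_sum)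
  finally show "polyL0 r a p (fdist_hat e g) x = fdist_hat (fdist_comp_poly p e) g x" .
qed

lemma flatapp_fdist_hat:
  assumes "g \<in> kerL0 r a" "c \<in> Sdist"
  shows "flatapp r a P N (fdist_hat c g) = fdist_hat (fdist_comp_op P N c) g"
proof
  fix x
  have g: "g holomorphic_on UNIV"
    using assms(1) by (simp add: kerL0_def)
  have "flatapp r a P N (fdist_hat c g) x
      = (\<Sum>k\<le>N. (deriv ^^ k) (fdist_hat (fdist_comp_poly (P k) c) g) x)"
    using assms by (simp add: flatapp_def polyL0_fdist_hat)
  also have "\<dots> = (\<Sum>k\<le>N. fdist_hat (fdist_comp_poly (P k) c) ((deriv ^^ k) g) x)"
    using assms(2) by (simp add: higher_deriv_fdist_hat[OF g] Sdist_comp_poly)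
  also have "\<dots> = fdist_hat (fdist_comp_op P N c) g x"
    using assms(2) by (simp add: fdist_hat_def dapp_comp_op_eq_sum higher_deriv_translate[OF g])
  finally show "flatapp r a P N (fdist_hat c g) x = fdist_hat (fdist_comp_op P N c) g x" .
qed

section \<open>Distributions annihilating the translates of ker L0\<close>

lemma fdist_comp_z_sub_apply:
  "fdist_comp_z e (l, j) - \<mu> * e (l, j) = (l - \<mu>) * e (l, j) + of_nat (Suc j) * e (l, Suc j)"
  by (simp add: fdist_comp_z_def algebra_simps)

lemma fdist_comp_z_sub_lowers_order:
  assumes "\<And>l j. e (l, j) \<noteq> 0 \<Longrightarrow> l \<in> L \<and> j < b l"
    and "fdist_comp_z e (l, j) - \<mu> * e (l, j) \<noteq> 0"
  shows "l \<in> L \<and> j < (b(\<mu> := b \<mu> - 1)) l"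
proof (cases "l = \<mu>")
  case True
  then have "e (\<mu>, Suc j) \<noteq> 0"
    using assms(2) by (simp add: fdist_comp_z_sub_apply)
  then show ?thesis
    using assms(1) True by fastforce
next
  case False
  then have "e (l, j) \<noteq> 0 \<or> e (l, Suc j) \<noteq> 0"
    using assms(2) by (auto simp: fdist_comp_z_sub_apply)
  then show ?thesis
    using assms(1) False by fastforce
qed

lemma fdist_supp_point_if_comp_z_sub_eq_0:
  assumes bound: "\<And>l j. e (l, j) \<noteq> 0 \<Longrightarrow> j < b l"
    and eq_0: "\<And>q. fdist_comp_z e q - \<mu> * e q = 0"
  shows "fdist_supp e \<subseteq> {(\<mu>, 0)}"
proof (clarsimp simp: fdist_supp_def)
  fix l j
  assume "e (l, j) \<noteq> 0"
  have rec: "(l - \<mu>) * e (l, i) + of_nat (Suc i) * e (l, Suc i) = 0" for i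
    using eq_0[of "(l, i)"] by (simp add: fdist_comp_z_sub_apply)
  show "l = \<mu> \<and> j = 0"
  proof (cases "l = \<mu>")
    case True
    with rec[of "j - 1"] \<open>e (l, j) \<noteq> 0\<close> show ?thesis
      by (cases j) (simp_all del: of_nat_Suc)
  next
    case False
    have "e (l, j + k) \<noteq> 0" for k
    proof (induction k)
      case (Suc k)
      then have "(l - \<mu>) * e (l, j + k) \<noteq> 0"
        using False by simp
      then show ?case
        using rec[of "j + k"] by auto
    qed (use \<open>e (l, j) \<noteq> 0\<close> in simp)
    then show ?thesis
      using bound[of l "j + b l"] by simp
  qed
qed

lemma fdist_eq_0_by_comp_z_descent:
  fixes A :: "fdist \<Rightarrow> bool"
  assumes stable: "\<And>e \<mu>. A e \<Longrightarrow> A (\<lambda>q. fdist_comp_z e q - \<mu> * e q)"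
    and point: "\<And>e \<mu>. A e \<Longrightarrow> fdist_supp e \<subseteq> {(\<mu>, 0)} \<Longrightarrow> e = (\<lambda>_. 0)"
    and "A e" "e \<in> Sdist"
  shows "e = (\<lambda>_. 0)"
proof -
  have descent: "e = (\<lambda>_. 0)"
    if "finite L" "\<And>l j. e (l, j) \<noteq> 0 \<Longrightarrow> l \<in> L \<and> j < b l" "A e" for L b e
    using that(2,3)
  proof (induction "\<Sum>l\<in>L. b l" arbitrary: b e rule: less_induct)
    case less
    show ?case
    proof (rule ccontr)
      assume "e \<noteq> (\<lambda>_. 0)"
      then obtain \<mu> j where "e (\<mu>, j) \<noteq> 0"
        by fastforce
      then have \<mu>: "\<mu> \<in> L" "b \<mu> > 0"
        using less.prems(1) by fastforce+
      let ?b = "b(\<mu> := b \<mu> - 1)"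
      have "(\<Sum>l\<in>L. ?b l) < (\<Sum>l\<in>L. b l)"
        using \<mu> \<open>finite L\<close> by (intro sum_strict_mono_ex1) auto
      then have lowered_0: "(\<lambda>q. fdist_comp_z e q - \<mu> * e q) = (\<lambda>_. 0)"
      proof (rule less.hyps)
        show "l \<in> L \<and> j < ?b l" if "fdist_comp_z e (l, j) - \<mu> * e (l, j) \<noteq> 0" for l j
          using less.prems(1) that by (rule fdist_comp_z_sub_lowers_order)
        show "A (\<lambda>q. fdist_comp_z e q - \<mu> * e q)"
          using less.prems(2) by (rule stable)
      qed
      have "fdist_supp e \<subseteq> {(\<mu>, 0)}"
      proof (rule fdist_supp_point_if_comp_z_sub_eq_0)
        show "j < b l" if "e (l, j) \<noteq> 0" for l j
          using less.prems(1) that by blast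
        show "fdist_comp_z e q - \<mu> * e q = 0" for q
          using fun_cong[OF lowered_0, of q] by simp
      qed
      then show False
        using point less.prems(2) \<open>e \<noteq> (\<lambda>_. 0)\<close> by blast
    qed
  qed
  obtain m where m: "\<And>p. p \<in> fdist_supp e \<Longrightarrow> snd p < m"
    using \<open>e \<in> Sdist\<close> finite_nat_set_iff_bounded[of "snd ` fdist_supp e"]
    by (auto simp: Sdist_iff_finite_supp)
  show ?thesis
  proof (rule descent[where L = "fst ` fdist_supp e" and b = "\<lambda>_. m"])
    show "finite (fst ` fdist_supp e)"
      using \<open>e \<in> Sdist\<close> by (simp add: Sdist_iff_finite_supp)
    show "l \<in> fst ` fdist_supp e \<and> j < m" if "e (l, j) \<noteq> 0" for l j
    proof -
      have "(l, j) \<in> fdist_supp e"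
        using that by (simp add: fdist_supp_def)
      with m show ?thesis
        by force
    qed
  qed fact
qed

lemma fdist_hat_diff_cmult:
  assumes "e1 \<in> Sdist" "e2 \<in> Sdist"
  shows "fdist_hat (\<lambda>q. e1 q - s * e2 q) g x = fdist_hat e1 g x - s * fdist_hat e2 g x"
  using assms
  by (simp add: fdist_hat_def dapp_eq_fdist_pair fdist_pair_diff Sdist_weight fdist_pair_cmult)

lemma L0_zero: "L0 r a (\<lambda>_. 0) = (\<lambda>_. 0)"
  by (simp add: L0_def)

lemma fdist_eq_0_if_annihilates_kerL0:
  assumes "g0 \<in> kerL0 r a" "g0 x0 \<noteq> 0" "e \<in> Sdist"
    and "\<forall>g\<in>kerL0 r a. fdist_hat e g = (\<lambda>_. 0)"
  shows "e = (\<lambda>_. 0)"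
proof (rule fdist_eq_0_by_comp_z_descent
    [where A = "\<lambda>e. e \<in> Sdist \<and> (\<forall>g\<in>kerL0 r a. fdist_hat e g = (\<lambda>_. 0))"])
  fix e \<mu>
  assume e: "e \<in> Sdist \<and> (\<forall>g\<in>kerL0 r a. fdist_hat e g = (\<lambda>_. 0))"
  then have "fdist_hat (\<lambda>q. fdist_comp_z e q - \<mu> * e q) g = (\<lambda>_. 0)" if "g \<in> kerL0 r a" for g
    using that L0_fdist_hat[OF that, of e, symmetric]
    by (intro ext) (simp add: fdist_hat_diff_cmult Sdist_comp_z L0_zero)
  then show "(\<lambda>q. fdist_comp_z e q - \<mu> * e q) \<in> Sdist
      \<and> (\<forall>g\<in>kerL0 r a. fdist_hat (\<lambda>q. fdist_comp_z e q - \<mu> * e q) g = (\<lambda>_. 0))"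
    using e by (simp add: Sdist_diff Sdist_comp_z Sdist_weight)
next
  fix e \<mu>
  assume e: "e \<in> Sdist \<and> (\<forall>g\<in>kerL0 r a. fdist_hat e g = (\<lambda>_. 0))"
    and supp: "fdist_supp e \<subseteq> {(\<mu>, 0)}"
  have "g0 holomorphic_on UNIV"
    using assms(1) by (simp add: kerL0_def)
  then have "fdist_hat e g0 (x0 - \<mu>)
      = (\<Sum>p\<in>{(\<mu>, 0)}. e p * (deriv ^^ snd p) g0 (fst p + (x0 - \<mu>)))"
    by (simp only: fdist_hat_eq_sum)
      (rule sum.mono_neutral_left, use supp in \<open>auto simp: fdist_supp_def\<close>)
  then have "fdist_hat e g0 (x0 - \<mu>) = e (\<mu>, 0) * g0 x0"
    by simp
  then have "e (\<mu>, 0) = 0"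
    using e assms(1,2) by auto
  with supp show "e = (\<lambda>_. 0)"
    by (auto simp: fdist_supp_def)
qed (use assms in auto)

lemma fdist_annihilates_kerL0_iff_entire:
  assumes "g0 \<in> kerL0 r a" "g0 x0 \<noteq> 0" "e \<in> Sdist"
  shows "(\<forall>g\<in>kerL0 r a. fdist_hat e g = (\<lambda>_. 0))
    \<longleftrightarrow> (\<forall>u. u holomorphic_on UNIV \<longrightarrow> dapp e u = 0)"
proof
  assume "\<forall>g\<in>kerL0 r a. fdist_hat e g = (\<lambda>_. 0)"
  then have "e = (\<lambda>_. 0)"
    using assms by (intro fdist_eq_0_if_annihilates_kerL0)
  then show "\<forall>u. u holomorphic_on UNIV \<longrightarrow> dapp e u = 0"
    by (simp add: dapp_def)
qed (auto simp: fdist_hat_def kerL0_def holomorphic_on_translate)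

theorem mainTheorem8:
  fixes r n :: nat and a :: "nat \<Rightarrow> complex" and f :: "nat \<Rightarrow> complex \<Rightarrow> complex"
    and lam gam :: "nat \<Rightarrow> complex"
  assumes "r > 1" and "n \<ge> 1"
    and "inj_on lam {..<n}"
    and "\<forall>j<r. f j \<in> kerL0 r a"
    and "\<forall>x. wronskian r f x = 1"
  shows "{c \<in> Sdist. \<forall>g \<in> kerL0 r a. \<forall>x.
            flatapp r a (Kbar r f lam gam n) (r * n) (\<lambda>y. dapp c (\<lambda>z. g (y + z))) x = 0}
       = {c \<in> Sdist. \<forall>u. u holomorphic_on UNIV \<longrightarrow>
            dapp c (opapp (Kbar r f lam gam n) (r * n) u) = 0}"
proof -
  have f0: "f 0 \<in> kerL0 r a"
    using assms(1,4) by simp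
  obtain x0 where x0: "f 0 x0 \<noteq> 0"
    using wronskian_zero_column[of 0 r f] assms(1,5) by fastforce
  have "(\<forall>g\<in>kerL0 r a. \<forall>x. flatapp r a (Kbar r f lam gam n) (r * n) (fdist_hat c g) x = 0)
      \<longleftrightarrow> (\<forall>u. u holomorphic_on UNIV \<longrightarrow> dapp c (opapp (Kbar r f lam gam n) (r * n) u) = 0)"
    if c: "c \<in> Sdist" for c
    using fdist_annihilates_kerL0_iff_entire[OF f0 x0 Sdist_comp_op[OF c]]
    by (simp add: flatapp_fdist_hat c dapp_comp_op fun_eq_iff)
  then show ?thesis
    by (auto simp: fdist_hat_def)
qed

end
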